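(* Let $G=(V,E)$ be a finite connected undirected graph, let $k$ be a positive integer, and fix a DFS order on $V$. Consider the lexicographic order $\preceq$ on $\mathcal{C}(G;k)$ induced by this vertex order. Let $X\in\mathcal{C}(G;k)$ be an element that is not the $\preceq$-smallest element of $\mathcal{C}(G;k)$. Then there exists $X'\in\mathcal{N}(X)$ with $X'\prec X$.
   Context: $\mathcal{C}(G;k)$ denotes the family of all vertex sets $X\subseteq V$ with $|X|=k$ such that the induced subgraph $G[X]$ is connected. For $X\in\mathcal{C}(G;k)$, the neighborhood of $X$ is $\mathcal{N}(X)=\{X'\in\mathcal{C}(G;k): |X\cap X'|=k-1\}$. A DFS order on $V$ is the linear order of the vertices by their discovery time in a depth-first search of $G$, started from some vertex, and vertices are compared using $<$ with respect to this order. For distinct $k$-sets $A,B\subseteq V$, write $A\prec B$ if the smallest vertex of the symmetric difference $A\triangle B$ lies in $A$. Equivalently, the increasing sequence of elements of $A$ is lexicographically smaller than that of $B$. Write $A\preceq B$ if $A\prec B$ or $A=B$. *)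

theory Defs
  imports Main
begin

definition graph :: "'a set \<Rightarrow> ('a \<Rightarrow> 'a \<Rightarrow> bool) \<Rightarrow> bool" where
  "graph V E \<longleftrightarrow> finite V \<and> (\<forall>u v. E u v \<longrightarrow> u \<in> V \<and> v \<in> V)
     \<and> (\<forall>u v. E u v \<longrightarrow> E v u) \<and> (\<forall>u. \<not> E u u)"

definition connected_on :: "('a \<Rightarrow> 'a \<Rightarrow> bool) \<Rightarrow> 'a set \<Rightarrow> bool" where
  "connected_on E X \<longleftrightarrow> X \<noteq> {} \<and>
     (\<forall>x\<in>X. \<forall>y\<in>X. (\<lambda>a b. a \<in> X \<and> b \<in> X \<and> E a b)\<^sup>*\<^sup>* x y)"

definition conn_sets :: "'a set \<Rightarrow> ('a \<Rightarrow> 'a \<Rightarrow> bool) \<Rightarrow> nat \<Rightarrow> 'a set set" where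
  "conn_sets V E k = {X. X \<subseteq> V \<and> card X = k \<and> connected_on E X}"

definition nbhd :: "'a set \<Rightarrow> ('a \<Rightarrow> 'a \<Rightarrow> bool) \<Rightarrow> nat \<Rightarrow> 'a set \<Rightarrow> 'a set set" where
  "nbhd V E k X = {X' \<in> conn_sets V E k. card (X \<inter> X') = k - 1}"

text \<open>State: (discovery order so far,
  stack of active vertices, top first).\<close>
inductive dfs_step :: "('a \<Rightarrow> 'a \<Rightarrow> bool) \<Rightarrow> 'a list \<times> 'a list \<Rightarrow> 'a list \<times> 'a list \<Rightarrow> bool"
  for E where
  push: "E u w \<Longrightarrow> w \<notin> set ord \<Longrightarrow> dfs_step E (ord, u # st) (ord @ [w], w # u # st)"
| pop: "(\<forall>w. E u w \<longrightarrow> w \<in> set ord) \<Longrightarrow> dfs_step E (ord, u # st) (ord, st)"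

definition dfs_order :: "'a set \<Rightarrow> ('a \<Rightarrow> 'a \<Rightarrow> bool) \<Rightarrow> 'a list \<Rightarrow> bool" where
  "dfs_order V E ord \<longleftrightarrow> (\<exists>r\<in>V. (dfs_step E)\<^sup>*\<^sup>* ([r], [r]) (ord, []))"

definition pos :: "'a list \<Rightarrow> 'a \<Rightarrow> nat" where
  "pos ord x = (LEAST i. i < length ord \<and> ord ! i = x)"

definition lex_less :: "'a list \<Rightarrow> 'a set \<Rightarrow> 'a set \<Rightarrow> bool" where
  "lex_less ord A B \<longleftrightarrow> A \<noteq> B \<and>
     (\<exists>x \<in> A - B. \<forall>y \<in> (A - B) \<union> (B - A). pos ord x \<le> pos ord y)"

definition lex_le :: "'a list \<Rightarrow> 'a set \<Rightarrow> 'a set \<Rightarrow> bool" where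
  "lex_le ord A B \<longleftrightarrow> lex_less ord A B \<or> A = B"

end

theory Submission
  imports Defs
begin

text \<open>A lexicographically smaller neighbour of X arises by adding a vertex u outside X and removing
  a vertex w of X that comes after u and does not separate X + u. If the root is not in X,
  take for u an earlier neighbour of the first vertex of X; it precedes all of X. Otherwise take
  for u the first vertex outside X. The initial segment Q ending at u is connected, lies in X + u
  and contains the root, so X + u is connected; as X is not minimal, some vertex of X lies
  outside Q, and growing Q inside X + u one vertex at a time shows that a non-separating vertex
  of X + u can be found outside Q, hence after u.\<close>

lemma connected_on_path_in_superset:
  assumes "connected_on E A" "A \<subseteq> B" "x \<in> A" "y \<in> A"
  shows "(\<lambda>a b. a \<in> B \<and> b \<in> B \<and> E a b)\<^sup>*\<^sup>* x y"
proof -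
  have "(\<lambda>a b. a \<in> A \<and> b \<in> A \<and> E a b)\<^sup>*\<^sup>* x y"
    using assms(1,3,4) unfolding connected_on_def by blast
  then show ?thesis
    by (rule rtranclp_mono[THEN predicate2D, rotated]) (use assms(2) in auto)
qed

lemma connected_on_singleton: "connected_on E {a}"
  unfolding connected_on_def by auto

lemma connected_on_Un:
  assumes "connected_on E A" "connected_on E B" "A \<inter> B \<noteq> {}"
  shows "connected_on E (A \<union> B)"
  unfolding connected_on_def
proof (intro conjI ballI)
  let ?R = "\<lambda>a b. a \<in> A \<union> B \<and> b \<in> A \<union> B \<and> E a b"
  obtain c where c: "c \<in> A" "c \<in> B" using assms(3) by blast
  have to_c: "?R\<^sup>*\<^sup>* x c" and from_c: "?R\<^sup>*\<^sup>* c x" if "x \<in> A \<union> B" for x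
    using that c connected_on_path_in_superset[OF assms(1), of "A \<union> B"]
      connected_on_path_in_superset[OF assms(2), of "A \<union> B"] by auto
  fix x y assume "x \<in> A \<union> B" "y \<in> A \<union> B"
  then show "?R\<^sup>*\<^sup>* x y" using to_c from_c by (blast intro: rtranclp_trans)
qed (use assms(1) in \<open>auto simp: connected_on_def\<close>)

lemma connected_on_insert:
  assumes "connected_on E A" "b \<in> A" "E a b" "E b a"
  shows "connected_on E (insert a A)"
proof -
  have "connected_on E {a, b}"
    unfolding connected_on_def using assms(3,4) by (auto intro: r_into_rtranclp)
  from connected_on_Un[OF assms(1) this] show ?thesis
    using assms(2) by (simp add: insert_absorb)
qed

lemma connected_on_edge_leaving:
  assumes "connected_on E S" "Q \<subseteq> S" "q \<in> Q" "s \<in> S - Q"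
  shows "\<exists>a\<in>Q. \<exists>b\<in>S - Q. E a b"
proof -
  have "y \<in> Q" if "(\<lambda>a b. a \<in> S \<and> b \<in> S \<and> E a b)\<^sup>*\<^sup>* q y" "\<not> (\<exists>a\<in>Q. \<exists>b\<in>S - Q. E a b)" for y
    using that by (induction rule: rtranclp_induct) (use assms(3) in auto)
  then show ?thesis
    using assms unfolding connected_on_def by blast
qed

text \<open>Grow the connected set Q inside S one vertex at a time; the last vertex added
  does not separate S.\<close>
lemma exists_nonseparating_vertex:
  assumes "symp E" "finite S" "connected_on E S" "connected_on E Q" "Q \<subset> S"
  shows "\<exists>w\<in>S - Q. connected_on E (S - {w})"
  using assms(4,5)
proof (induction "card (S - Q)" arbitrary: Q rule: less_induct)
  case less
  obtain q where q: "q \<in> Q" using less.prems(1) unfolding connected_on_def by blast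
  obtain s where s: "s \<in> S - Q" using less.prems(2) by blast
  obtain a b where ab: "a \<in> Q" "b \<in> S - Q" "E a b"
    using connected_on_edge_leaving[OF assms(3) psubset_imp_subset[OF less.prems(2)] q s] by blast
  have "E b a" using ab(3) assms(1) by (simp add: sympD)
  then have conn_bQ: "connected_on E (insert b Q)"
    using connected_on_insert[OF less.prems(1) ab(1)] ab(3) by blast
  show ?case
  proof (cases "insert b Q = S")
    case True
    then have "S - {b} = Q" using ab(2) by blast
    then show ?thesis using ab(2) less.prems(1) by auto
  next
    case False
    then have "insert b Q \<subset> S" using ab(2) less.prems(2) by blast
    moreover have "card (S - insert b Q) < card (S - Q)"
      using ab(2) assms(2) by (intro psubset_card_mono) auto
    ultimately obtain w where "w \<in> S - insert b Q" "connected_on E (S - {w})"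
      using less.hyps conn_bQ by blast
    then show ?thesis by blast
  qed
qed

definition connected_ordering :: "('a \<Rightarrow> 'a \<Rightarrow> bool) \<Rightarrow> 'a list \<Rightarrow> bool" where
  "connected_ordering E xs \<longleftrightarrow> (\<forall>i<length xs. 0 < i \<longrightarrow> (\<exists>j<i. E (xs ! j) (xs ! i)))"

lemma connected_ordering_snoc:
  "connected_ordering E (xs @ [w]) \<longleftrightarrow>
     connected_ordering E xs \<and> (xs \<noteq> [] \<longrightarrow> (\<exists>x\<in>set xs. E x w))"
proof -
  let ?ys = "xs @ [w]"
  have split_last: "(\<forall>i<Suc n. P i) \<longleftrightarrow> (\<forall>i<n. P i) \<and> P n" for P and n :: nat
    by (auto simp: less_Suc_eq)
  have "(\<exists>j<i. E (?ys ! j) (?ys ! i)) \<longleftrightarrow> (\<exists>j<i. E (xs ! j) (xs ! i))" if "i < length xs" for i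
    using that by (metis (no_types, lifting) nth_append order.strict_trans)
  then have "(\<forall>i<length xs. 0 < i \<longrightarrow> (\<exists>j<i. E (?ys ! j) (?ys ! i))) \<longleftrightarrow> connected_ordering E xs"
    unfolding connected_ordering_def by auto
  moreover have "(\<exists>j<length xs. E (?ys ! j) (?ys ! length xs)) \<longleftrightarrow> (\<exists>x\<in>set xs. E x w)"
    by (simp add: nth_append) (metis in_set_conv_nth)
  ultimately show ?thesis
    unfolding connected_ordering_def[of E ?ys] length_append_singleton split_last by auto
qed

lemma connected_ordering_take:
  assumes "connected_ordering E xs"
  shows "connected_ordering E (take n xs)"
  unfolding connected_ordering_def
proof (intro allI impI)
  fix i assume i: "i < length (take n xs)" "0 < i"
  then obtain j where "j < i" "E (xs ! j) (xs ! i)"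
    using assms unfolding connected_ordering_def by auto
  then show "\<exists>j<i. E (take n xs ! j) (take n xs ! i)"
    using i(1) by (intro exI[of _ j]) simp
qed

lemma connected_on_set_if_connected_ordering:
  assumes "symp E" "connected_ordering E xs" "xs \<noteq> []"
  shows "connected_on E (set xs)"
  using assms(2,3)
proof (induction xs rule: rev_induct)
  case (snoc w xs)
  show ?case
  proof (cases "xs = []")
    case True
    then show ?thesis using connected_on_singleton by simp
  next
    case False
    then obtain x where "x \<in> set xs" "E x w"
      using snoc.prems(1) by (auto simp: connected_ordering_snoc)
    moreover have "connected_on E (set xs)"
      using snoc False by (simp add: connected_ordering_snoc)
    ultimately show ?thesis
      using connected_on_insert[of E "set xs" x w] assms(1) by (simp add: sympD)
  qed
qed simp

lemma pos_nth: "distinct xs \<Longrightarrow> i < length xs \<Longrightarrow> pos xs (xs ! i) = i"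
  unfolding pos_def by (rule Least_equality) (auto simp: nth_eq_iff_index_eq)

lemma pos_less_length_and_nth_pos:
  assumes "x \<in> set xs"
  shows pos_less_length: "pos xs x < length xs" and nth_pos: "xs ! pos xs x = x"
proof -
  have "pos xs x < length xs \<and> xs ! pos xs x = x"
    unfolding pos_def by (rule LeastI_ex) (use assms in \<open>auto simp: in_set_conv_nth\<close>)
  then show "pos xs x < length xs" "xs ! pos xs x = x" by simp_all
qed

lemma pos_hd: "xs \<noteq> [] \<Longrightarrow> pos xs (hd xs) = 0"
  unfolding pos_def by (rule Least_equality) (auto simp: hd_conv_nth)

lemma pos_inj:
  "x \<in> set xs \<Longrightarrow> y \<in> set xs \<Longrightarrow> pos xs x = pos xs y \<Longrightarrow> x = y"
  by (metis pos_less_length_and_nth_pos)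

lemma set_take_Suc_pos:
  assumes "distinct xs" "x \<in> set xs"
  shows "set (take (Suc (pos xs x)) xs) = {y \<in> set xs. pos xs y \<le> pos xs x}"
proof (intro set_eqI iffI)
  fix y assume "y \<in> set (take (Suc (pos xs x)) xs)"
  then obtain i where "i < length xs" "i \<le> pos xs x" "y = xs ! i"
    by (auto simp: in_set_conv_nth)
  then show "y \<in> {y \<in> set xs. pos xs y \<le> pos xs x}"
    using pos_nth[OF assms(1)] by simp
next
  fix y assume y: "y \<in> {y \<in> set xs. pos xs y \<le> pos xs x}"
  then have "pos xs y < length xs" "xs ! pos xs y = y"
    using pos_less_length_and_nth_pos by fastforce+
  then show "y \<in> set (take (Suc (pos xs x)) xs)"
    using y by (auto simp: in_set_conv_nth intro!: exI[of _ "pos xs y"])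
qed

lemma connected_on_initial_segment:
  assumes "symp E" "distinct xs" "connected_ordering E xs" "x \<in> set xs"
  shows "connected_on E {y \<in> set xs. pos xs y \<le> pos xs x}"
proof -
  have "take (Suc (pos xs x)) xs \<noteq> []" using assms(4) by auto
  then show ?thesis
    unfolding set_take_Suc_pos[OF assms(2,4), symmetric]
    using connected_on_set_if_connected_ordering[OF assms(1) connected_ordering_take[OF assms(3)]]
    by blast
qed

lemma connected_ordering_earlier_neighbour:
  assumes "distinct xs" "connected_ordering E xs" "v \<in> set xs" "v \<noteq> hd xs"
  shows "\<exists>p\<in>set xs. E p v \<and> pos xs p < pos xs v"
proof -
  have v: "pos xs v < length xs" "xs ! pos xs v = v"
    using pos_less_length_and_nth_pos[OF assms(3)] by auto
  then have "pos xs v \<noteq> 0" using assms(4) by (metis hd_conv_nth list.size(3) not_less_zero)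
  then have "\<exists>j<pos xs v. E (xs ! j) (xs ! pos xs v)"
    using assms(2) v(1) unfolding connected_ordering_def by blast
  then obtain j where j: "j < pos xs v" "E (xs ! j) v" using v(2) by auto
  then have "j < length xs" using v(1) by simp
  then show ?thesis using j pos_nth[OF assms(1)] by (intro bexI[of _ "xs ! j"]) auto
qed

text \<open>The last conjunct says that a vertex popped from the stack has all its neighbours
  discovered; once the stack is empty, the discovered set is closed under adjacency.\<close>
fun dfs_invariant :: "'a set \<Rightarrow> ('a \<Rightarrow> 'a \<Rightarrow> bool) \<Rightarrow> 'a \<Rightarrow> 'a list \<times> 'a list \<Rightarrow> bool" where
  "dfs_invariant V E r (ord, st) \<longleftrightarrow>
     distinct ord \<and> r \<in> set ord \<and> set ord \<subseteq> V \<and> set st \<subseteq> set ord \<and> connected_ordering E ord \<and>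
     (\<forall>v \<in> set ord - set st. \<forall>w. E v w \<longrightarrow> w \<in> set ord)"

lemma dfs_step_preserves_invariant:
  assumes "graph V E" "dfs_step E s s'" "dfs_invariant V E r s"
  shows "dfs_invariant V E r s'"
  using assms(2)
proof cases
  case (push u w ord st)
  have I: "distinct ord" "r \<in> set ord" "set ord \<subseteq> V" "set (u # st) \<subseteq> set ord"
    "connected_ordering E ord" "\<forall>v \<in> set ord - set (u # st). \<forall>x. E v x \<longrightarrow> x \<in> set ord"
    using assms(3) unfolding push(1) dfs_invariant.simps by blast+
  have "w \<in> V" using push(3) assms(1) unfolding graph_def by blast
  moreover have "connected_ordering E (ord @ [w])"
    using I(4,5) push(3) unfolding connected_ordering_snoc by auto
  moreover have "x \<in> set (ord @ [w])" if "v \<in> set (ord @ [w]) - set (w # u # st)" "E v x" for v x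
  proof -
    have "v \<in> set ord - set (u # st)" using that(1) by simp
    then have "x \<in> set ord" using I(6) that(2) by blast
    then show ?thesis by simp
  qed
  ultimately show ?thesis
    using I(1-4) push(4) unfolding push(2) dfs_invariant.simps by auto
next
  case (pop u ord st)
  have I: "distinct ord" "r \<in> set ord" "set ord \<subseteq> V" "set (u # st) \<subseteq> set ord"
    "connected_ordering E ord" "\<forall>v \<in> set ord - set (u # st). \<forall>x. E v x \<longrightarrow> x \<in> set ord"
    using assms(3) unfolding pop(1) dfs_invariant.simps by blast+
  have "x \<in> set ord" if "v \<in> set ord - set st" "E v x" for v x
  proof (cases "v = u")
    case False
    then have "v \<in> set ord - set (u # st)" using that(1) by simp
    then show ?thesis using I(6) that(2) by blast
  qed (use that(2) pop(3) in simp)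
  then show ?thesis
    using I(1-5) unfolding pop(2) dfs_invariant.simps by auto
qed

lemma dfs_order_connected_ordering:
  assumes "graph V E" "connected_on E V" "dfs_order V E ord"
  shows "distinct ord \<and> set ord = V \<and> connected_ordering E ord"
proof -
  obtain r where r: "r \<in> V" "(dfs_step E)\<^sup>*\<^sup>* ([r], [r]) (ord, [])"
    using assms(3) unfolding dfs_order_def by blast
  have "dfs_invariant V E r ([r], [r])"
    using r(1) by (simp add: connected_ordering_def)
  with r(2) have "dfs_invariant V E r (ord, [])"
    by (induction rule: rtranclp_induct) (auto intro: dfs_step_preserves_invariant[OF assms(1)])
  then have I: "distinct ord" "r \<in> set ord" "set ord \<subseteq> V" "connected_ordering E ord"
    "\<forall>v\<in>set ord. \<forall>x. E v x \<longrightarrow> x \<in> set ord"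
    by simp_all
  have "y \<in> set ord" if "(\<lambda>a b. a \<in> V \<and> b \<in> V \<and> E a b)\<^sup>*\<^sup>* r y" for y
    using that
  proof (induction rule: rtranclp_induct)
    case (step y z)
    then show ?case using I(5) by blast
  qed (rule I(2))
  then have "V \<subseteq> set ord" using assms(2) r(1) unfolding connected_on_def by blast
  with I show ?thesis by auto
qed

lemma exchange_mem_nbhd:
  assumes "finite V" "X \<in> conn_sets V E k" "u \<in> V" "u \<notin> X" "w \<in> X"
    and "connected_on E (insert u (X - {w}))"
  shows "insert u (X - {w}) \<in> nbhd V E k X"
proof -
  have X: "X \<subseteq> V" "card X = k" using assms(2) unfolding conn_sets_def by auto
  then have "finite X" using assms(1) finite_subset by blast
  moreover have "0 < card X" using calculation assms(5) card_gt_0_iff by blast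
  moreover have "X \<inter> insert u (X - {w}) = X - {w}" using assms(4) by blast
  ultimately show ?thesis
    using X assms(3-6) unfolding nbhd_def conn_sets_def by (auto simp: card_insert_if)
qed

lemma lex_less_exchange:
  assumes "u \<notin> X" "w \<in> X" "pos ord u \<le> pos ord w"
  shows "lex_less ord (insert u (X - {w})) X"
  unfolding lex_less_def
proof (intro conjI bexI[of _ u] ballI)
  fix y assume "y \<in> insert u (X - {w}) - X \<union> (X - insert u (X - {w}))"
  then have "y = u \<or> y = w" by blast
  then show "pos ord u \<le> pos ord y" using assms(3) by auto
qed (use assms(1) in auto)

lemma lex_smaller_nbhd_by_exchange:
  assumes "symp E" "finite V" "X \<in> conn_sets V E k" "u \<in> V" "u \<notin> X"
    and "connected_on E (insert u X)" "connected_on E Q" "u \<in> Q" "Q \<subseteq> insert u X" "\<not> X \<subseteq> Q"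
    and "\<forall>w\<in>X - Q. pos ord u \<le> pos ord w"
  shows "\<exists>X'\<in>nbhd V E k X. lex_less ord X' X"
proof -
  have "finite (insert u X)"
    using assms(2,3) finite_subset unfolding conn_sets_def by auto
  moreover have "Q \<subset> insert u X" using assms(9,10) by blast
  ultimately obtain w where w: "w \<in> insert u X - Q" "connected_on E (insert u X - {w})"
    using exists_nonseparating_vertex[OF assms(1) _ assms(6,7)] by blast
  then have "w \<in> X - Q" "insert u X - {w} = insert u (X - {w})" using assms(8) by auto
  then show ?thesis
    using exchange_mem_nbhd[OF assms(2-5), of w] lex_less_exchange[OF assms(5), of w] assms(11) w(2)
    by auto
qed

lemma lex_le_if_initial_segment:
  assumes "finite V" "X \<subseteq> V" "Y \<subseteq> V" "card X = card Y"
    and "\<forall>v\<in>V - X. \<forall>x\<in>X. pos ord x \<le> pos ord v"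
  shows "lex_le ord X Y"
proof (cases "X = Y")
  case False
  have "finite X" "finite Y" using assms(1-3) finite_subset by auto
  then have "X - Y \<noteq> {}" using False assms(4) by (metis Diff_eq_empty_iff card_subset_eq)
  then obtain x where x: "x \<in> X - Y" "\<forall>y\<in>X - Y. pos ord x \<le> pos ord y"
    using ex_has_least_nat[of "\<lambda>x. x \<in> X - Y" _ "pos ord"] by blast
  have "\<forall>y\<in>(X - Y) \<union> (Y - X). pos ord x \<le> pos ord y"
    using x assms(3,5) by blast
  then show ?thesis using False x(1) unfolding lex_le_def lex_less_def by blast
qed (simp add: lex_le_def)

context
  fixes V :: "'a set" and E :: "'a \<Rightarrow> 'a \<Rightarrow> bool" and ord :: "'a list"
  assumes symp: "symp E" and distinct_ord: "distinct ord" and set_ord: "set ord = V"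
    and connected_ord: "connected_ordering E ord"
begin

lemma finite_V: "finite V"
  using set_ord by auto

lemma lex_smaller_nbhd_if_hd_notin:
  assumes X: "X \<in> conn_sets V E k" and hd: "hd ord \<notin> X"
  shows "\<exists>X'\<in>nbhd V E k X. lex_less ord X' X"
proof -
  have XV: "X \<subseteq> V" "connected_on E X"
    using X unfolding conn_sets_def by auto
  then have "X \<noteq> {}" unfolding connected_on_def by blast
  then obtain m where m: "m \<in> X" "\<forall>y\<in>X. pos ord m \<le> pos ord y"
    using ex_has_least_nat[of "\<lambda>x. x \<in> X" _ "pos ord"] by blast
  have "m \<in> set ord" "m \<noteq> hd ord" using m(1) XV(1) set_ord hd by auto
  then obtain p where p: "p \<in> set ord" "E p m" "pos ord p < pos ord m"
    using connected_ordering_earlier_neighbour[OF distinct_ord connected_ord] by blast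
  have "p \<notin> X" using p(3) m(2) by (meson not_le)
  have "E m p" using p(2) symp by (simp add: sympD)
  then have "connected_on E (insert p X)"
    using connected_on_insert[OF XV(2) m(1) p(2)] by simp
  moreover have "\<forall>w\<in>X - {p}. pos ord p \<le> pos ord w"
    using p(3) m(2) by (meson DiffD1 le_trans less_imp_le)
  moreover have "\<not> X \<subseteq> {p}" using \<open>X \<noteq> {}\<close> \<open>p \<notin> X\<close> by blast
  moreover have "p \<in> V" using p(1) set_ord by simp
  ultimately show ?thesis
    using lex_smaller_nbhd_by_exchange[OF symp finite_V X _ \<open>p \<notin> X\<close> _ connected_on_singleton
        singletonI] by simp
qed

lemma lex_smaller_nbhd_if_hd_in:
  assumes X: "X \<in> conn_sets V E k" and hd: "hd ord \<in> X"
    and v: "v \<in> V - X" and x: "x \<in> X" and vx: "pos ord v < pos ord x"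
  shows "\<exists>X'\<in>nbhd V E k X. lex_less ord X' X"
proof -
  have XV: "X \<subseteq> V" "connected_on E X"
    using X unfolding conn_sets_def by auto
  obtain u where u: "u \<in> V - X" "\<forall>y\<in>V - X. pos ord u \<le> pos ord y"
    using ex_has_least_nat[of "\<lambda>x. x \<in> V - X" v "pos ord"] v by blast
  define Q where "Q = {y \<in> V. pos ord y \<le> pos ord u}"
  have "u \<in> set ord" using u(1) set_ord by simp
  then have Q: "connected_on E Q"
    unfolding Q_def using connected_on_initial_segment[OF symp distinct_ord connected_ord] set_ord
    by simp
  have uQ: "u \<in> Q" using u(1) unfolding Q_def by simp
  have QX: "Q \<subseteq> insert u X"
  proof
    fix y assume "y \<in> Q"
    then have y: "y \<in> V" "pos ord y \<le> pos ord u" unfolding Q_def by auto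
    show "y \<in> insert u X"
    proof (rule ccontr)
      assume "y \<notin> insert u X"
      then have "pos ord u \<le> pos ord y" "y \<noteq> u" using y(1) u(2) by auto
      then have "pos ord y = pos ord u" using y(2) by simp
      then show False using pos_inj[of y ord u] \<open>y \<noteq> u\<close> y(1) u(1) set_ord by simp
    qed
  qed
  have "ord \<noteq> []" using \<open>u \<in> set ord\<close> by auto
  then have "hd ord \<in> X \<inter> Q"
    using hd XV(1) unfolding Q_def by (simp add: pos_hd subsetD)
  then have "connected_on E (X \<union> Q)"
    using connected_on_Un[OF XV(2) Q] by blast
  moreover have "X \<union> Q = insert u X" using uQ QX by blast
  ultimately have conn: "connected_on E (insert u X)" by simp
  have "pos ord u < pos ord x" using u(2) v vx by (meson le_less_trans)
  then have "\<not> X \<subseteq> Q" using x unfolding Q_def by auto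
  moreover have "\<forall>w\<in>X - Q. pos ord u \<le> pos ord w"
    using XV(1) unfolding Q_def by auto
  ultimately show ?thesis
    using u(1) lex_smaller_nbhd_by_exchange[OF symp finite_V X _ _ conn Q uQ QX] by blast
qed

end

theorem lemma2:
  fixes V :: "'a set" and E :: "'a \<Rightarrow> 'a \<Rightarrow> bool" and k :: nat and ord :: "'a list"
    and X :: "'a set"
  assumes "graph V E"
    and "connected_on E V"
    and "k \<ge> 1"
    and "dfs_order V E ord"
    and "X \<in> conn_sets V E k"
    and "\<not> (\<forall>Y \<in> conn_sets V E k. lex_le ord X Y)"
  shows "\<exists>X' \<in> nbhd V E k X. lex_less ord X' X"
proof -
  have symp: "symp E" using assms(1) unfolding graph_def symp_def by blast
  have ord: "distinct ord" "set ord = V" "connected_ordering E ord"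
    using dfs_order_connected_ordering[OF assms(1,2,4)] by auto
  show ?thesis
  proof (cases "hd ord \<in> X")
    case False
    then show ?thesis using lex_smaller_nbhd_if_hd_notin[OF symp ord assms(5)] by blast
  next
    case True
    obtain Y where "Y \<in> conn_sets V E k" "\<not> lex_le ord X Y" using assms(6) by blast
    then obtain v x where "v \<in> V - X" "x \<in> X" "pos ord v < pos ord x"
      using lex_le_if_initial_segment[of V X Y ord] assms(5) ord(2)
      unfolding conn_sets_def by (fastforce simp: not_le)
    then show ?thesis using lex_smaller_nbhd_if_hd_in[OF symp ord assms(5) True] by blast
  qed
qed

end
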